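(* Let $n\ge1$, $r\ge0$ and $0\le k\le n$. Then $\kappa\,d\,\mathcal{J}_r\Lambda^k(\mathbb{R}^n)=\mathcal{J}_r\Lambda^k(\mathbb{R}^n)$.
   Context: For a multi-index $\alpha\in\mathbb{N}^n$ and $\sigma=\{\sigma(1)<\dots<\sigma(k)\}\subset\{1,\dots,n\}$, the form monomial is $x^\alpha dx_\sigma:=x_1^{\alpha_1}\cdots x_n^{\alpha_n}\,dx_{\sigma(1)}\wedge\cdots\wedge dx_{\sigma(k)}$. $\mathcal{H}_r\Lambda^k(\mathbb{R}^n)$ is the span of form monomials with $|\alpha|=r$, $|\sigma|=k$. $d$ is the exterior derivative. The Koszul operator is $\kappa(x^\alpha dx_\sigma)=\sum_{i=1}^k(-1)^{i+1}x^\alpha x_{\sigma(i)}\,dx_{\sigma(1)}\wedge\cdots\wedge\widehat{dx_{\sigma(i)}}\wedge\cdots\wedge dx_{\sigma(k)}$, extended linearly. The linear degree is $\mathrm{ldeg}(x^\alpha dx_\sigma):=\#\{i\notin\sigma:\alpha_i=1\}$; $\mathcal{H}_{r,l}\Lambda^k$ is the span of form monomials in $\mathcal{H}_r\Lambda^k$ with linear degree $\ge l$; and $\mathcal{J}_r\Lambda^k(\mathbb{R}^n):=\sum_{l\ge1}\kappa\,\mathcal{H}_{r+l-1,l}\Lambda^{k+1}(\mathbb{R}^n)$ (with $\Lambda^{n+1}=0$). *)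

theory Defs
  imports Complex_Main
begin

text \<open>Polynomial differential forms on R^n are represented by their coefficient functions:
  a form is  omega :: (nat => nat) => nat set => real, where  omega alpha sigma  is the
  coefficient of the form monomial  x^alpha dx_sigma.  Coordinates are indexed 0..n-1,
  multi-indices alpha satisfy alpha i = 0 for i >= n, and sigma is a subset of {..<n}
  (the wedge product is taken in increasing order of sigma).\<close>

type_synonym form = "(nat \<Rightarrow> nat) \<Rightarrow> nat set \<Rightarrow> real"

definition sgnpos :: "nat \<Rightarrow> nat set \<Rightarrow> real" where
  "sgnpos j tau = (-1) ^ card {s \<in> tau. s < j}"

text \<open>Exterior derivative, coefficientwise:
  d(x^alpha dx_sigma) = sum over j not in sigma of alpha_j x^(alpha-e_j) dx_j wedge dx_sigma.\<close>
definition extd :: "form \<Rightarrow> form" where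
  "extd omega = (\<lambda>beta tau. \<Sum>j\<in>tau. sgnpos j tau * real (beta j + 1)
        * omega (beta(j := beta j + 1)) (tau - {j}))"

text \<open>Koszul operator, coefficientwise:
  kappa(x^alpha dx_sigma) = sum_i (-1)^(i+1) x^alpha x_(sigma(i)) dx_(sigma minus sigma(i)).\<close>
definition kappa :: "nat \<Rightarrow> form \<Rightarrow> form" where
  "kappa n omega = (\<lambda>beta tau. \<Sum>i\<in>{i. i < n \<and> i \<notin> tau \<and> 0 < beta i}.
        sgnpos i tau * omega (beta(i := beta i - 1)) (insert i tau))"

definition ldeg :: "nat \<Rightarrow> (nat \<Rightarrow> nat) \<Rightarrow> nat set \<Rightarrow> nat" where
  "ldeg n alpha sigma = card {i. i < n \<and> i \<notin> sigma \<and> alpha i = 1}"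

definition monoH :: "nat \<Rightarrow> nat \<Rightarrow> nat \<Rightarrow> (nat \<Rightarrow> nat) \<Rightarrow> nat set \<Rightarrow> bool" where
  "monoH n r k alpha sigma \<longleftrightarrow> (\<forall>i\<ge>n. alpha i = 0) \<and> (\<Sum>i<n. alpha i) = r
      \<and> sigma \<subseteq> {..<n} \<and> card sigma = k"

text \<open>H_{r,l} Lambda^k(R^n): span of the form monomials in H_r Lambda^k with linear degree >= l,
  i.e. the forms whose coefficients vanish off these (finitely many) monomials.\<close>
definition Hrl :: "nat \<Rightarrow> nat \<Rightarrow> nat \<Rightarrow> nat \<Rightarrow> form set" where
  "Hrl n r l k = {omega. \<forall>alpha sigma. omega alpha sigma \<noteq> 0 \<longrightarrow>
        monoH n r k alpha sigma \<and> l \<le> ldeg n alpha sigma}"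

text \<open>J_r Lambda^k(R^n) = sum over l >= 1 of kappa H_{r+l-1,l} Lambda^{k+1}(R^n)
  (sum of subspaces = set of finite sums).\<close>
definition Jr :: "nat \<Rightarrow> nat \<Rightarrow> nat \<Rightarrow> form set" where
  "Jr n r k = {eta. \<exists>L w. finite L \<and> L \<subseteq> {1..} \<and>
        (\<forall>l\<in>L. w l \<in> Hrl n (r + l - 1) l (k + 1)) \<and>
        eta = (\<lambda>beta tau. \<Sum>l\<in>L. kappa n (w l) beta tau)}"

end

theory Submission
  imports Defs
begin

text \<open>For a form \<open>\<omega>\<close> whose monomials all have polynomial degree \<open>s\<close> and form degree \<open>m\<close>,
  Cartan's homotopy formula gives \<open>\<kappa> d \<omega> + d \<kappa> \<omega> = (s + m) \<omega>\<close>.  Together with \<open>\<kappa> \<kappa> = 0\<close>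
  this yields \<open>\<kappa> d (\<kappa> \<omega>) = (s + m) \<kappa> \<omega>\<close>.  Hence \<open>\<kappa> d\<close> acts on each summand
  \<open>\<kappa> H_{r+l-1,l} \<Lambda>^{k+1}\<close> of \<open>J_r \<Lambda>^k\<close> as multiplication by the nonzero scalar \<open>r + l + k\<close>,
  and so maps \<open>J_r \<Lambda>^k\<close> onto itself.\<close>

lemma sgnpos_insert:
  assumes "i \<notin> \<tau>"
  shows "sgnpos j (insert i \<tau>) = (if i < j then -1 else 1) * sgnpos j \<tau>"
proof -
  have fin: "finite {s \<in> \<tau>. s < j}" by (rule finite_subset[of _ "{..<j}"]) auto
  show ?thesis
  proof (cases "i < j")
    case True
    then have "{s \<in> insert i \<tau>. s < j} = insert i {s \<in> \<tau>. s < j}" by auto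
    then show ?thesis using True fin assms by (simp add: sgnpos_def)
  next
    case False
    then have "{s \<in> insert i \<tau>. s < j} = {s \<in> \<tau>. s < j}" by auto
    then show ?thesis using False by (simp add: sgnpos_def)
  qed
qed

lemma sgnpos_Diff_singleton:
  assumes "j \<in> \<tau>"
  shows "sgnpos i (\<tau> - {j}) = (if j < i then -1 else 1) * sgnpos i \<tau>"
proof -
  have "sgnpos i \<tau> = (if j < i then -1 else 1) * sgnpos i (\<tau> - {j})"
    using sgnpos_insert[of j "\<tau> - {j}" i] assms by (simp add: insert_absorb)
  then show ?thesis by auto
qed

lemma sgnpos_square: "sgnpos j \<tau> * sgnpos j \<tau> = 1"
  unfolding sgnpos_def by (simp flip: power_add)

lemma kappa_sum:
  "kappa n (\<lambda>\<beta> \<tau>. \<Sum>l\<in>L. f l \<beta> \<tau>) = (\<lambda>\<beta> \<tau>. \<Sum>l\<in>L. kappa n (f l) \<beta> \<tau>)"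
  unfolding kappa_def by (auto simp: sum_distrib_left intro!: ext sum.swap)

lemma extd_sum: "extd (\<lambda>\<beta> \<tau>. \<Sum>l\<in>L. f l \<beta> \<tau>) = (\<lambda>\<beta> \<tau>. \<Sum>l\<in>L. extd (f l) \<beta> \<tau>)"
  unfolding extd_def by (auto simp: sum_distrib_left intro!: ext sum.swap)

lemma kappa_scale: "kappa n (\<lambda>\<beta> \<tau>. c * f \<beta> \<tau>) = (\<lambda>\<beta> \<tau>. c * kappa n f \<beta> \<tau>)"
  unfolding kappa_def by (auto simp: sum_distrib_left intro!: ext sum.cong)

lemma kappa_diff:
  "kappa n (\<lambda>\<beta> \<tau>. f \<beta> \<tau> - g \<beta> \<tau>) = (\<lambda>\<beta> \<tau>. kappa n f \<beta> \<tau> - kappa n g \<beta> \<tau>)"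
  unfolding kappa_def by (auto simp: algebra_simps sum_subtractf intro!: ext)

lemma extd_eq_0_if_infinite: "infinite \<tau> \<Longrightarrow> extd \<omega> \<beta> \<tau> = 0"
  unfolding extd_def by simp

lemma Hrl_scale: "\<omega> \<in> Hrl n s l m \<Longrightarrow> (\<lambda>\<beta> \<tau>. c * \<omega> \<beta> \<tau>) \<in> Hrl n s l m"
  unfolding Hrl_def by auto

lemma kappa_extd_summand:
  assumes fin: "finite \<tau>" and i: "i \<notin> \<tau>" and pos: "0 < \<beta> i"
  shows "sgnpos i \<tau> * extd \<omega> (\<beta>(i := \<beta> i - 1)) (insert i \<tau>) = real (\<beta> i) * \<omega> \<beta> \<tau>
     + (\<Sum>j\<in>\<tau>. (if i < j then -1 else 1) * (sgnpos i \<tau> * sgnpos j \<tau> * real (\<beta> j + 1)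
          * \<omega> (\<beta>(i := \<beta> i - 1, j := \<beta> j + 1)) (insert i (\<tau> - {j}))))"
proof -
  have diag: "sgnpos i (insert i \<tau>) * real ((\<beta>(i := \<beta> i - 1)) i + 1)
      * \<omega> ((\<beta>(i := \<beta> i - 1))(i := (\<beta>(i := \<beta> i - 1)) i + 1)) (insert i \<tau> - {i})
      = sgnpos i \<tau> * real (\<beta> i) * \<omega> \<beta> \<tau>"
  proof -
    have "(\<beta>(i := \<beta> i - 1))(i := (\<beta>(i := \<beta> i - 1)) i + 1) = \<beta>" using pos by auto
    moreover have "insert i \<tau> - {i} = \<tau>" using i by auto
    moreover have "real ((\<beta>(i := \<beta> i - 1)) i + 1) = real (\<beta> i)" using pos by simp
    ultimately show ?thesis using sgnpos_insert[OF i, of i] by simp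
  qed
  have off_diag: "sgnpos j (insert i \<tau>) * real ((\<beta>(i := \<beta> i - 1)) j + 1)
      * \<omega> ((\<beta>(i := \<beta> i - 1))(j := (\<beta>(i := \<beta> i - 1)) j + 1)) (insert i \<tau> - {j})
      = (if i < j then -1 else 1) * (sgnpos j \<tau> * real (\<beta> j + 1)
          * \<omega> (\<beta>(i := \<beta> i - 1, j := \<beta> j + 1)) (insert i (\<tau> - {j})))" if j: "j \<in> \<tau>" for j
  proof -
    have ij: "i \<noteq> j" using i j by auto
    have "insert i \<tau> - {j} = insert i (\<tau> - {j})" using ij by auto
    then show ?thesis using ij sgnpos_insert[OF i, of j] by simp
  qed
  have "extd \<omega> (\<beta>(i := \<beta> i - 1)) (insert i \<tau>) = sgnpos i \<tau> * real (\<beta> i) * \<omega> \<beta> \<tau>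
     + (\<Sum>j\<in>\<tau>. (if i < j then -1 else 1) * (sgnpos j \<tau> * real (\<beta> j + 1)
          * \<omega> (\<beta>(i := \<beta> i - 1, j := \<beta> j + 1)) (insert i (\<tau> - {j}))))"
    unfolding extd_def sum.insert[OF fin i] diag using off_diag by (simp cong: sum.cong)
  then have "sgnpos i \<tau> * extd \<omega> (\<beta>(i := \<beta> i - 1)) (insert i \<tau>) =
     (sgnpos i \<tau> * sgnpos i \<tau>) * real (\<beta> i) * \<omega> \<beta> \<tau>
     + (\<Sum>j\<in>\<tau>. sgnpos i \<tau> * ((if i < j then -1 else 1) * (sgnpos j \<tau> * real (\<beta> j + 1)
          * \<omega> (\<beta>(i := \<beta> i - 1, j := \<beta> j + 1)) (insert i (\<tau> - {j})))))"
    by (simp add: algebra_simps sum_distrib_left)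
  then show ?thesis by (simp add: sgnpos_square mult_ac)
qed

lemma extd_kappa_summand:
  assumes fin: "finite \<tau>" and j: "j \<in> \<tau>"
  shows "sgnpos j \<tau> * real (\<beta> j + 1) * kappa n \<omega> (\<beta>(j := \<beta> j + 1)) (\<tau> - {j})
    = (if j < n then real (\<beta> j + 1) * \<omega> \<beta> \<tau> else 0)
    + (\<Sum>i\<in>{i. i < n \<and> i \<notin> \<tau> \<and> 0 < \<beta> i}. (if j < i then -1 else 1)
        * (sgnpos i \<tau> * sgnpos j \<tau> * real (\<beta> j + 1)
           * \<omega> (\<beta>(i := \<beta> i - 1, j := \<beta> j + 1)) (insert i (\<tau> - {j}))))"
proof -
  define I where "I = {i. i < n \<and> i \<notin> \<tau> \<and> 0 < \<beta> i}"
  have fI: "finite I" unfolding I_def by (rule finite_subset[of _ "{..<n}"]) auto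
  have jI: "j \<notin> I" using j unfolding I_def by auto
  have off_diag: "sgnpos i (\<tau> - {j})
       * \<omega> ((\<beta>(j := \<beta> j + 1))(i := (\<beta>(j := \<beta> j + 1)) i - 1)) (insert i (\<tau> - {j}))
     = (if j < i then -1 else 1)
       * (sgnpos i \<tau> * \<omega> (\<beta>(i := \<beta> i - 1, j := \<beta> j + 1)) (insert i (\<tau> - {j})))"
    if iI: "i \<in> I" for i
  proof -
    have ij: "i \<noteq> j" using iI jI by auto
    have "(\<beta>(j := \<beta> j + 1))(i := (\<beta>(j := \<beta> j + 1)) i - 1) = \<beta>(i := \<beta> i - 1, j := \<beta> j + 1)"
      using ij by (auto simp: fun_upd_twist)
    then show ?thesis using sgnpos_Diff_singleton[OF j, of i] by simp
  qed
  have diag: "sgnpos j (\<tau> - {j})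
       * \<omega> ((\<beta>(j := \<beta> j + 1))(j := (\<beta>(j := \<beta> j + 1)) j - 1)) (insert j (\<tau> - {j}))
     = sgnpos j \<tau> * \<omega> \<beta> \<tau>"
  proof -
    have "(\<beta>(j := \<beta> j + 1))(j := (\<beta>(j := \<beta> j + 1)) j - 1) = \<beta>" by auto
    moreover have "insert j (\<tau> - {j}) = \<tau>" using j by auto
    ultimately show ?thesis using sgnpos_Diff_singleton[OF j, of j] by simp
  qed
  have index_set: "{i. i < n \<and> i \<notin> \<tau> - {j} \<and> 0 < (\<beta>(j := \<beta> j + 1)) i}
      = (if j < n then insert j I else I)"
    unfolding I_def by auto
  have kappa_eq: "kappa n \<omega> (\<beta>(j := \<beta> j + 1)) (\<tau> - {j})
      = (if j < n then sgnpos j \<tau> * \<omega> \<beta> \<tau> else 0)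
      + (\<Sum>i\<in>I. (if j < i then -1 else 1)
          * (sgnpos i \<tau> * \<omega> (\<beta>(i := \<beta> i - 1, j := \<beta> j + 1)) (insert i (\<tau> - {j}))))"
  proof (cases "j < n")
    case True
    show ?thesis unfolding kappa_def index_set using True
      by (simp only: if_True sum.insert[OF fI jI] diag sum.cong[OF refl off_diag])
  next
    case False
    show ?thesis unfolding kappa_def index_set using False
      by (simp only: if_False sum.cong[OF refl off_diag])
  qed
  have "sgnpos j \<tau> * real (\<beta> j + 1) * kappa n \<omega> (\<beta>(j := \<beta> j + 1)) (\<tau> - {j})
     = (if j < n then (sgnpos j \<tau> * sgnpos j \<tau>) * real (\<beta> j + 1) * \<omega> \<beta> \<tau> else 0)
      + (\<Sum>i\<in>I. sgnpos j \<tau> * real (\<beta> j + 1) * ((if j < i then -1 else 1)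
          * (sgnpos i \<tau> * \<omega> (\<beta>(i := \<beta> i - 1, j := \<beta> j + 1)) (insert i (\<tau> - {j})))))"
    unfolding kappa_eq by (simp add: algebra_simps sum_distrib_left)
  then show ?thesis unfolding I_def[symmetric] by (simp add: sgnpos_square mult_ac)
qed

text \<open>The mixed terms of the two summand lemmas agree up to the sign factors, which are
  opposite because \<open>i \<notin> \<tau>\<close> and \<open>j \<in> \<tau>\<close> forces \<open>i \<noteq> j\<close>; so only the diagonal terms survive.\<close>

lemma homotopy_formula:
  assumes fin: "finite \<tau>"
  shows "kappa n (extd \<omega>) \<beta> \<tau> + extd (kappa n \<omega>) \<beta> \<tau> =
    ((\<Sum>i\<in>{i. i < n \<and> i \<notin> \<tau>}. real (\<beta> i)) + (\<Sum>j\<in>{j\<in>\<tau>. j < n}. real (\<beta> j + 1))) * \<omega> \<beta> \<tau>"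
proof -
  define I where "I = {i. i < n \<and> i \<notin> \<tau> \<and> 0 < \<beta> i}"
  define C where "C i j = sgnpos i \<tau> * sgnpos j \<tau> * real (\<beta> j + 1)
          * \<omega> (\<beta>(i := \<beta> i - 1, j := \<beta> j + 1)) (insert i (\<tau> - {j}))" for i j
  have kappa_extd: "kappa n (extd \<omega>) \<beta> \<tau> = (\<Sum>i\<in>I. real (\<beta> i) * \<omega> \<beta> \<tau>)
      + (\<Sum>i\<in>I. \<Sum>j\<in>\<tau>. (if i < j then -1 else 1) * C i j)"
  proof -
    have "kappa n (extd \<omega>) \<beta> \<tau>
        = (\<Sum>i\<in>I. sgnpos i \<tau> * extd \<omega> (\<beta>(i := \<beta> i - 1)) (insert i \<tau>))"
      unfolding kappa_def I_def by simp
    also have "\<dots> = (\<Sum>i\<in>I. real (\<beta> i) * \<omega> \<beta> \<tau> + (\<Sum>j\<in>\<tau>. (if i < j then -1 else 1) * C i j))"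
      unfolding C_def by (intro sum.cong refl kappa_extd_summand[OF fin]) (auto simp: I_def)
    finally show ?thesis by (simp add: sum.distrib)
  qed
  have extd_kappa: "extd (kappa n \<omega>) \<beta> \<tau>
      = (\<Sum>j\<in>\<tau>. if j < n then real (\<beta> j + 1) * \<omega> \<beta> \<tau> else 0)
      + (\<Sum>i\<in>I. \<Sum>j\<in>\<tau>. (if j < i then -1 else 1) * C i j)"
  proof -
    have "extd (kappa n \<omega>) \<beta> \<tau>
        = (\<Sum>j\<in>\<tau>. sgnpos j \<tau> * real (\<beta> j + 1) * kappa n \<omega> (\<beta>(j := \<beta> j + 1)) (\<tau> - {j}))"
      unfolding extd_def by simp
    also have "\<dots> = (\<Sum>j\<in>\<tau>. (if j < n then real (\<beta> j + 1) * \<omega> \<beta> \<tau> else 0)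
                         + (\<Sum>i\<in>I. (if j < i then -1 else 1) * C i j))"
      unfolding C_def I_def by (intro sum.cong refl extd_kappa_summand[OF fin])
    finally show ?thesis by (simp add: sum.distrib sum.swap[of _ \<tau> I])
  qed
  have cancel: "(\<Sum>i\<in>I. \<Sum>j\<in>\<tau>. (if i < j then -1 else 1) * C i j)
      + (\<Sum>i\<in>I. \<Sum>j\<in>\<tau>. (if j < i then -1 else 1) * C i j) = 0"
  proof -
    have "(if i < j then -1 else 1) * C i j + (if j < i then -1 else 1) * C i j = 0"
      if "i \<in> I" "j \<in> \<tau>" for i j
      using that by (auto simp: I_def)
    then show ?thesis by (simp add: sum.distrib[symmetric])
  qed
  have "(\<Sum>i\<in>I. real (\<beta> i)) = (\<Sum>i\<in>{i. i < n \<and> i \<notin> \<tau>}. real (\<beta> i))"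
    by (rule sum.mono_neutral_left) (auto simp: I_def)
  moreover have "(\<Sum>j\<in>\<tau>. if j < n then real (\<beta> j + 1) * \<omega> \<beta> \<tau> else 0)
      = (\<Sum>j\<in>{j\<in>\<tau>. j < n}. real (\<beta> j + 1)) * \<omega> \<beta> \<tau>"
    using fin by (simp add: sum.inter_filter[symmetric] sum_distrib_right)
  ultimately show ?thesis
    using kappa_extd extd_kappa cancel by (simp add: sum_distrib_right[symmetric] algebra_simps)
qed

lemma kappa_kappa: "kappa n (kappa n \<omega>) \<beta> \<tau> = 0"
proof -
  define I where "I = {i. i < n \<and> i \<notin> \<tau> \<and> 0 < \<beta> i}"
  have fI: "finite I" unfolding I_def by (rule finite_subset[of _ "{..<n}"]) auto
  define F where "F i i' = sgnpos i \<tau> * sgnpos i' \<tau>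
      * \<omega> (\<beta>(i := \<beta> i - 1, i' := \<beta> i' - 1)) (insert i' (insert i \<tau>))" for i i'
  have F_sym: "F i i' = F i' i" if "i \<noteq> i'" for i i'
    unfolding F_def using that by (simp add: fun_upd_twist insert_commute mult_ac)
  define h where "h i i' = (if i = i' then 0 else (if i < i' then -1 else 1) * F i i')" for i i'
  have h_antisym: "h i i' = - h i' i" for i i'
    unfolding h_def using F_sym[of i i'] by auto
  have inner: "kappa n \<omega> (\<beta>(i := \<beta> i - 1)) (insert i \<tau>) * sgnpos i \<tau> = (\<Sum>i'\<in>I. h i i')"
    if iI: "i \<in> I" for i
  proof -
    have index_set: "{i'. i' < n \<and> i' \<notin> insert i \<tau> \<and> 0 < (\<beta>(i := \<beta> i - 1)) i'} = {i'\<in>I. i' \<noteq> i}"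
      unfolding I_def by auto
    have "kappa n \<omega> (\<beta>(i := \<beta> i - 1)) (insert i \<tau>) * sgnpos i \<tau>
       = (\<Sum>i'\<in>{i'\<in>I. i' \<noteq> i}. sgnpos i' (insert i \<tau>)
           * \<omega> ((\<beta>(i := \<beta> i - 1))(i' := (\<beta>(i := \<beta> i - 1)) i' - 1)) (insert i' (insert i \<tau>))
           * sgnpos i \<tau>)"
      unfolding kappa_def index_set by (simp add: sum_distrib_right)
    also have "\<dots> = (\<Sum>i'\<in>{i'\<in>I. i' \<noteq> i}. h i i')"
    proof (rule sum.cong[OF refl])
      fix i' assume "i' \<in> {i'\<in>I. i' \<noteq> i}"
      then have "i' \<noteq> i" and "i \<notin> \<tau>" using iI by (auto simp: I_def)
      then show "sgnpos i' (insert i \<tau>)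
          * \<omega> ((\<beta>(i := \<beta> i - 1))(i' := (\<beta>(i := \<beta> i - 1)) i' - 1)) (insert i' (insert i \<tau>))
          * sgnpos i \<tau> = h i i'"
        unfolding h_def F_def using sgnpos_insert[of i \<tau> i'] by (simp add: mult_ac)
    qed
    also have "\<dots> = (\<Sum>i'\<in>I. h i i')"
      using fI by (auto simp: sum.inter_filter h_def intro!: sum.cong)
    finally show ?thesis .
  qed
  have "kappa n (kappa n \<omega>) \<beta> \<tau> = (\<Sum>i\<in>I. \<Sum>i'\<in>I. h i i')"
    unfolding kappa_def[of n "kappa n \<omega>"] I_def[symmetric]
    by (rule sum.cong[OF refl]) (simp add: inner[symmetric] mult_ac)
  moreover have "(\<Sum>i\<in>I. \<Sum>i'\<in>I. h i i') = - (\<Sum>i\<in>I. \<Sum>i'\<in>I. h i i')"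
  proof -
    have "(\<Sum>i\<in>I. \<Sum>i'\<in>I. h i i') = (\<Sum>i'\<in>I. \<Sum>i\<in>I. h i i')" by (rule sum.swap)
    also have "\<dots> = (\<Sum>i'\<in>I. \<Sum>i\<in>I. - h i' i)" by (simp add: h_antisym[symmetric])
    also have "\<dots> = - (\<Sum>i\<in>I. \<Sum>i'\<in>I. h i i')" by (simp add: sum_negf)
    finally show ?thesis .
  qed
  ultimately show ?thesis by simp
qed

lemma monoH_weight:
  assumes "monoH n s m \<beta> \<tau>"
  shows "(\<Sum>i\<in>{i. i < n \<and> i \<notin> \<tau>}. real (\<beta> i)) + (\<Sum>j\<in>{j\<in>\<tau>. j < n}. real (\<beta> j + 1))
    = real (s + m)"
proof -
  have sub: "\<tau> \<subseteq> {..<n}" and card: "card \<tau> = m" and deg: "(\<Sum>i<n. \<beta> i) = s"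
    using assms unfolding monoH_def by auto
  have fin: "finite \<tau>" using sub finite_subset by blast
  have "{..<n} = {i. i < n \<and> i \<notin> \<tau>} \<union> \<tau>" using sub by auto
  then have "(\<Sum>i<n. real (\<beta> i))
      = (\<Sum>i\<in>{i. i < n \<and> i \<notin> \<tau>}. real (\<beta> i)) + (\<Sum>i\<in>\<tau>. real (\<beta> i))"
    using fin by (metis (no_types, lifting) sum.union_disjoint disjoint_iff finite_lessThan
        finite_Un mem_Collect_eq)
  moreover have "{j\<in>\<tau>. j < n} = \<tau>" using sub by auto
  ultimately show ?thesis using deg card by (simp add: sum.distrib flip: of_nat_sum)
qed

lemma extd_kappa_homogeneous:
  assumes "\<omega> \<in> Hrl n s l m"
  shows "extd (kappa n \<omega>) = (\<lambda>\<beta> \<tau>. real (s + m) * \<omega> \<beta> \<tau> - kappa n (extd \<omega>) \<beta> \<tau>)"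
proof (intro ext)
  fix \<beta> \<tau>
  show "extd (kappa n \<omega>) \<beta> \<tau> = real (s + m) * \<omega> \<beta> \<tau> - kappa n (extd \<omega>) \<beta> \<tau>"
  proof (cases "\<omega> \<beta> \<tau> = 0")
    case True
    show ?thesis
    proof (cases "finite \<tau>")
      case True
      then show ?thesis using homotopy_formula[OF True, of n \<omega> \<beta>] \<open>\<omega> \<beta> \<tau> = 0\<close> by simp
    next
      case False
      then show ?thesis using \<open>\<omega> \<beta> \<tau> = 0\<close> by (simp add: extd_eq_0_if_infinite kappa_def)
    qed
  next
    case False
    then have "monoH n s m \<beta> \<tau>" using assms unfolding Hrl_def by auto
    moreover from this have "finite \<tau>"
      unfolding monoH_def using finite_subset by blast
    ultimately show ?thesis using homotopy_formula[of \<tau> n \<omega> \<beta>] monoH_weight by simp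
  qed
qed

lemma kappa_extd_kappa_homogeneous:
  assumes "\<omega> \<in> Hrl n s l m"
  shows "kappa n (extd (kappa n \<omega>)) = kappa n (\<lambda>\<beta> \<tau>. real (s + m) * \<omega> \<beta> \<tau>)"
  unfolding extd_kappa_homogeneous[OF assms] kappa_diff kappa_scale by (simp add: kappa_kappa)

lemma kappa_extd_Jr_sum:
  assumes "\<forall>l\<in>L. w l \<in> Hrl n (r + l - 1) l (k + 1)"
  shows "kappa n (extd (\<lambda>\<beta> \<tau>. \<Sum>l\<in>L. kappa n (w l) \<beta> \<tau>))
     = (\<lambda>\<beta> \<tau>. \<Sum>l\<in>L. kappa n (\<lambda>\<beta> \<tau>. real (r + l - 1 + (k + 1)) * w l \<beta> \<tau>) \<beta> \<tau>)"
  unfolding extd_sum kappa_sum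
proof (intro ext sum.cong refl)
  fix \<beta> \<tau> l assume "l \<in> L"
  then show "kappa n (\<lambda>\<beta> \<tau>. extd (kappa n (w l)) \<beta> \<tau>) \<beta> \<tau>
      = kappa n (\<lambda>\<beta> \<tau>. real (r + l - 1 + (k + 1)) * w l \<beta> \<tau>) \<beta> \<tau>"
    using kappa_extd_kappa_homogeneous[of "w l" n "r + l - 1" l "k + 1"] assms by simp
qed

theorem mainTheorem12:
  fixes n r k :: nat
  assumes "1 \<le> n" and "k \<le> n"
  shows "(\<lambda>omega. kappa n (extd omega)) ` Jr n r k = Jr n r k"
proof (intro equalityI subsetI)
  fix x assume "x \<in> (\<lambda>omega. kappa n (extd omega)) ` Jr n r k"
  then obtain L w where L: "finite L" "L \<subseteq> {1..}" and w: "\<forall>l\<in>L. w l \<in> Hrl n (r + l - 1) l (k + 1)"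
    and x: "x = kappa n (extd (\<lambda>\<beta> \<tau>. \<Sum>l\<in>L. kappa n (w l) \<beta> \<tau>))"
    unfolding Jr_def by auto
  show "x \<in> Jr n r k" unfolding Jr_def x kappa_extd_Jr_sum[OF w]
    using L w by (auto intro!: exI[of _ L]
        exI[of _ "\<lambda>l \<beta> \<tau>. real (r + l - 1 + (k + 1)) * w l \<beta> \<tau>"] Hrl_scale)
next
  fix x assume "x \<in> Jr n r k"
  then obtain L w where L: "finite L" "L \<subseteq> {1..}" and w: "\<forall>l\<in>L. w l \<in> Hrl n (r + l - 1) l (k + 1)"
    and x: "x = (\<lambda>\<beta> \<tau>. \<Sum>l\<in>L. kappa n (w l) \<beta> \<tau>)"
    unfolding Jr_def by auto
  define w' where "w' l = (\<lambda>\<beta> \<tau>. w l \<beta> \<tau> / real (r + l - 1 + (k + 1)))" for l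
  have w': "\<forall>l\<in>L. w' l \<in> Hrl n (r + l - 1) l (k + 1)"
    using w unfolding w'_def by (auto simp: Hrl_def)
  have "(\<lambda>\<beta> \<tau>. real (r + l - 1 + (k + 1)) * w' l \<beta> \<tau>) = w l" for l
    unfolding w'_def by simp
  then have "kappa n (extd (\<lambda>\<beta> \<tau>. \<Sum>l\<in>L. kappa n (w' l) \<beta> \<tau>)) = x"
    unfolding kappa_extd_Jr_sum[OF w'] x by simp
  moreover have "(\<lambda>\<beta> \<tau>. \<Sum>l\<in>L. kappa n (w' l) \<beta> \<tau>) \<in> Jr n r k"
    unfolding Jr_def using L w' by auto
  ultimately show "x \<in> (\<lambda>omega. kappa n (extd omega)) ` Jr n r k" by blast
qed

end
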